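(* Let $N\ge 2$, $\lambda\neq 0$, and for $x,p\in\mathbb{C}^N$ set $$L_k(x,p;\lambda)=\begin{pmatrix}1+\lambda p_k & -\lambda^2e^{x_k}\\ e^{-x_k} & 0\end{pmatrix},\qquad T_N(x,p;\lambda)=L_N(x,p;\lambda)\cdots L_2(x,p;\lambda)L_1(x,p;\lambda).$$ (a) Periodic case: if $\widetilde{x}\in\mathbb{C}^N$ satisfies $p_k=\frac{1}{\lambda}\big(e^{\widetilde{x}_k-x_k}-1\big)+\lambda e^{x_k-\widetilde{x}_{k-1}}$ for $k=1,\dots,N$ with $\widetilde x_0=\widetilde x_N$, then $\prod_{k=1}^Ne^{\widetilde{x}_k-x_k}$ is an eigenvalue of $T_N(x,p;\lambda)$. (b) Open-end case: if $\widetilde{x}\in\mathbb{C}^N$ satisfies $p_1=\frac{1}{\lambda}\big(e^{\widetilde{x}_1-x_1}-1\big)$ and $p_k=\frac{1}{\lambda}\big(e^{\widetilde{x}_k-x_k}-1\big)+\lambda e^{x_k-\widetilde{x}_{k-1}}$ for $k=2,\dots,N$, then $\prod_{k=1}^Ne^{\widetilde{x}_k-x_k}$ equals the $(1,1)$-entry of $T_N(x,p;\lambda)$.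
   Context: The relation between $(x,p)$ and $\widetilde x$ is the first half of the Bäcklund transformation $F_\lambda$ of the Toda lattice $\ddot x_k=e^{x_{k+1}-x_k}-e^{x_k-x_{k-1}}$ (periodic, resp. open-end boundary conditions). *)

theory Defs
  imports "Jordan_Normal_Form.Char_Poly"
begin

text \<open>Lax matrix L_k(x,p;lambda) of the Toda lattice (2x2, indices 0,1 stand for 1,2).
  Vectors x, p in C^N are represented as functions nat => complex, used at indices 1..N.\<close>
definition toda_L :: "(nat \<Rightarrow> complex) \<Rightarrow> (nat \<Rightarrow> complex) \<Rightarrow> complex \<Rightarrow> nat \<Rightarrow> complex mat" where
  "toda_L x p lam k = mat_of_rows_list 2
     [[1 + lam * p k, - (lam\<^sup>2) * exp (x k)],
      [exp (- x k), 0]]"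

fun toda_T :: "(nat \<Rightarrow> complex) \<Rightarrow> (nat \<Rightarrow> complex) \<Rightarrow> complex \<Rightarrow> nat \<Rightarrow> complex mat" where
  "toda_T x p lam 0 = 1\<^sub>m 2"
| "toda_T x p lam (Suc n) = toda_L x p lam (Suc n) * toda_T x p lam n"

end

theory Submission
  imports Defs
begin

text \<open>
  Put \<open>v(c) = (1, c)\<close> and \<open>\<mu>\<^sub>k = exp (xt\<^sub>k - x\<^sub>k)\<close>. A direct computation gives
  \<open>L\<^sub>k v(c) = \<mu>\<^sub>k v(exp (- xt\<^sub>k))\<close> as soon as \<open>1 + \<lambda> p\<^sub>k - \<lambda>\<^sup>2 exp x\<^sub>k c = \<mu>\<^sub>k\<close>,
  and the Baecklund relation for \<open>p\<^sub>k\<close> is exactly this condition with \<open>c = exp (- xt\<^sub>k\<^sub>-\<^sub>1)\<close>.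
  Chaining, \<open>T\<^sub>N v(c\<^sub>0) = (\<Prod>\<^sub>k \<mu>\<^sub>k) v(exp (- xt\<^sub>N))\<close>. In the periodic case
  \<open>c\<^sub>0 = exp (- xt\<^sub>N)\<close>, so \<open>v(c\<^sub>0)\<close> is an eigenvector; in the open-end case the relation
  for \<open>p\<^sub>1\<close> is the condition with \<open>c\<^sub>0 = 0\<close>, and the first component of \<open>T\<^sub>N v(0)\<close>
  is the \<open>(1,1)\<close>-entry of \<open>T\<^sub>N\<close>.
\<close>

definition toda_vec :: "complex \<Rightarrow> complex vec" where
  "toda_vec c = vec 2 (\<lambda>i. if i = 0 then 1 else c)"

lemma toda_vec_carrier [simp]: "toda_vec c \<in> carrier_vec 2"
  by (simp add: toda_vec_def)

lemma toda_vec_nonzero: "toda_vec c \<noteq> 0\<^sub>v 2"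
proof
  assume "toda_vec c = 0\<^sub>v 2"
  then have "toda_vec c $ 0 = 0\<^sub>v 2 $ 0" by simp
  then show False by (simp add: toda_vec_def)
qed

lemma toda_L_carrier: "toda_L x p lam k \<in> carrier_mat 2 2"
  by (simp add: toda_L_def mat_of_rows_list_def numeral_2_eq_2)

lemma toda_T_carrier: "toda_T x p lam n \<in> carrier_mat 2 2"
  by (induction n) (auto intro!: mult_carrier_mat[OF toda_L_carrier])

lemma toda_L_mult_toda_vec:
  assumes "1 + lam * p k - lam\<^sup>2 * exp (x k) * c = exp (xt k - x k)"
  shows "toda_L x p lam k *\<^sub>v toda_vec c = exp (xt k - x k) \<cdot>\<^sub>v toda_vec (exp (- xt k))"
proof -
  have "exp (- x k) = exp (xt k - x k) * exp (- xt k)"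
    by (simp flip: exp_add)
  then show ?thesis
    using assms
    by (intro eq_vecI) (auto simp: toda_L_def toda_vec_def mat_of_rows_list_def
        mult_mat_vec_def scalar_prod_def row_def numeral_2_eq_2 less_Suc_eq algebra_simps)
qed

lemma backlund_relation_condition:
  fixes lam q u v y :: complex
  assumes "lam \<noteq> 0"
    and "q = (exp (v - u) - 1) / lam + lam * exp (u - y)"
  shows "1 + lam * q - lam\<^sup>2 * exp u * exp (- y) = exp (v - u)"
proof -
  have "exp (u - y) = exp u * exp (- y)"
    by (simp add: exp_diff exp_minus field_simps)
  then show ?thesis
    using assms by (simp add: field_simps power2_eq_square)
qed

lemma toda_T_mult_chain:
  assumes "\<And>k. 1 \<le> k \<Longrightarrow> k \<le> n \<Longrightarrow> toda_L x p lam k *\<^sub>v V (k - 1) = mu k \<cdot>\<^sub>v V k"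
    and "\<And>k. V k \<in> carrier_vec 2"
  shows "toda_T x p lam n *\<^sub>v V 0 = (\<Prod>k=1..n. mu k) \<cdot>\<^sub>v V n"
  using assms(1)
proof (induction n)
  case 0
  show ?case using assms(2)[of 0] by simp
next
  case (Suc n)
  have "toda_T x p lam (Suc n) *\<^sub>v V 0 = toda_L x p lam (Suc n) *\<^sub>v (toda_T x p lam n *\<^sub>v V 0)"
    using assoc_mult_mat_vec[OF toda_L_carrier toda_T_carrier assms(2)] by simp
  also have "\<dots> = (\<Prod>k=1..n. mu k) \<cdot>\<^sub>v (toda_L x p lam (Suc n) *\<^sub>v V n)"
    using Suc by (simp add: mult_mat_vec[OF toda_L_carrier assms(2)])
  also have "toda_L x p lam (Suc n) *\<^sub>v V n = mu (Suc n) \<cdot>\<^sub>v V (Suc n)"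
    using Suc.prems[of "Suc n"] by simp
  finally show ?case
    by (simp add: smult_smult_assoc mult.commute)
qed

lemma toda_T_mult_toda_vec:
  assumes "\<And>k. 1 \<le> k \<Longrightarrow> k \<le> n \<Longrightarrow>
      1 + lam * p k - lam\<^sup>2 * exp (x k) * c (k - 1) = exp (xt k - x k)"
    and "\<And>k. 1 \<le> k \<Longrightarrow> k \<le> n \<Longrightarrow> c k = exp (- xt k)"
  shows "toda_T x p lam n *\<^sub>v toda_vec (c 0) = (\<Prod>k=1..n. exp (xt k - x k)) \<cdot>\<^sub>v toda_vec (c n)"
proof (rule toda_T_mult_chain[where V = "\<lambda>k. toda_vec (c k)"])
  fix k assume "1 \<le> k" "k \<le> n"
  then show "toda_L x p lam k *\<^sub>v toda_vec (c (k - 1)) = exp (xt k - x k) \<cdot>\<^sub>v toda_vec (c k)"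
    using assms by (simp add: toda_L_mult_toda_vec)
qed simp

lemma toda_T_periodic_eigenvalue:
  assumes N: "1 \<le> N" and lam: "lam \<noteq> 0"
    and backlund: "\<forall>k\<in>{1..N}. p k = (exp (xt k - x k) - 1) / lam
      + lam * exp (x k - (if k = 1 then xt N else xt (k - 1)))"
  shows "eigenvalue (toda_T x p lam N) (\<Prod>k=1..N. exp (xt k - x k))"
proof -
  define c where "c k = exp (- xt (if k = 0 then N else k))" for k
  have "toda_T x p lam N *\<^sub>v toda_vec (c 0) = (\<Prod>k=1..N. exp (xt k - x k)) \<cdot>\<^sub>v toda_vec (c N)"
  proof (rule toda_T_mult_toda_vec)
    fix k assume k: "1 \<le> k" "k \<le> N"
    have "c (k - 1) = exp (- (if k = 1 then xt N else xt (k - 1)))"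
      using k by (simp add: c_def)
    moreover have "p k = (exp (xt k - x k) - 1) / lam
        + lam * exp (x k - (if k = 1 then xt N else xt (k - 1)))"
      using backlund k by simp
    ultimately show "1 + lam * p k - lam\<^sup>2 * exp (x k) * c (k - 1) = exp (xt k - x k)"
      using backlund_relation_condition[OF lam] by metis
    show "c k = exp (- xt k)"
      using k by (simp add: c_def)
  qed
  moreover have "c N = c 0"
    using N by (simp add: c_def)
  ultimately show ?thesis
    using toda_T_carrier[of x p lam N] toda_vec_nonzero
    unfolding eigenvalue_def eigenvector_def by (intro exI[of _ "toda_vec (c 0)"]) auto
qed

lemma toda_T_open_end_entry:
  assumes lam: "lam \<noteq> 0"
    and backlund1: "p 1 = (exp (xt 1 - x 1) - 1) / lam"
    and backlund: "\<And>k. 2 \<le> k \<Longrightarrow> k \<le> N \<Longrightarrow>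
      p k = (exp (xt k - x k) - 1) / lam + lam * exp (x k - xt (k - 1))"
  shows "(\<Prod>k=1..N. exp (xt k - x k)) = toda_T x p lam N $$ (0, 0)"
proof -
  define c where "c k = (if k = 0 then 0 else exp (- xt k))" for k
  have "toda_T x p lam N *\<^sub>v toda_vec (c 0) = (\<Prod>k=1..N. exp (xt k - x k)) \<cdot>\<^sub>v toda_vec (c N)"
  proof (rule toda_T_mult_toda_vec)
    fix k assume k: "1 \<le> k" "k \<le> N"
    show "1 + lam * p k - lam\<^sup>2 * exp (x k) * c (k - 1) = exp (xt k - x k)"
    proof (cases "k = 1")
      case True
      then show ?thesis using backlund1 lam by (simp add: c_def)
    next
      case False
      with k have "p k = (exp (xt k - x k) - 1) / lam + lam * exp (x k - xt (k - 1))"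
        by (intro backlund) auto
      from backlund_relation_condition[OF lam this] k False show ?thesis
        by (simp add: c_def)
    qed
    show "c k = exp (- xt k)"
      using k by (simp add: c_def)
  qed
  then have "(toda_T x p lam N *\<^sub>v toda_vec 0) $ 0 = (\<Prod>k=1..N. exp (xt k - x k))"
    by (simp add: c_def toda_vec_def)
  then show ?thesis
    using toda_T_carrier[of x p lam N]
    by (simp add: toda_vec_def mult_mat_vec_def scalar_prod_def row_def numeral_2_eq_2)
qed

theorem theorem3:
  fixes N :: nat and lam :: complex and x p xt :: "nat \<Rightarrow> complex"
  assumes "N \<ge> 2" and "lam \<noteq> 0"
  shows
    "((\<forall>k\<in>{1..N}. p k = (exp (xt k - x k) - 1) / lam
          + lam * exp (x k - (if k = 1 then xt N else xt (k - 1))))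
       \<longrightarrow> eigenvalue (toda_T x p lam N) (\<Prod>k=1..N. exp (xt k - x k)))
     \<and>
     ((p 1 = (exp (xt 1 - x 1) - 1) / lam \<and>
       (\<forall>k\<in>{2..N}. p k = (exp (xt k - x k) - 1) / lam + lam * exp (x k - xt (k - 1))))
       \<longrightarrow> (\<Prod>k=1..N. exp (xt k - x k)) = toda_T x p lam N $$ (0, 0))"
  using toda_T_periodic_eigenvalue[of N lam p xt x] toda_T_open_end_entry[of lam p xt x N] assms
  by auto

end
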